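(* With the matrices defined in the context, $U\,V_\beta=K_\beta\,U$; i.e. the diagram $C_0\xrightarrow{U}H_0$, $V_\beta:C_0\to C_0$, $K_\beta:H_0\to H_0$, $C_0\xrightarrow{U}H_0$ commutes.
   Context: Setting. $I\subset\mathbb{R}$ compact interval; $f_i(x)=\rho_ix+\varrho_i$ ($i=1,\dots,n$), $0<|\rho_i|<1$, IFS with open set condition; $I$ is the union of a nonempty open interval $I_h$ (hole) and $f_1(I),\dots,f_n(I)$, with pairwise disjoint interiors and $I_h$ disjoint from the $f_i(I)$; $F(x)=f_i^{-1}(x)$ on $f_i(I)$. The laps $I_1,\dots,I_n$ (left to right) and the hole have endpoints $a_1<\dots<a_{n+2}$, hole $(a_h,a_{h+1})$; interior endpoints are turning/discontinuity points. Assume the forward orbit of every one-sided endpoint $a_i^\pm$ is finite. Points $y^{(1)},\dots,y^{(q)}$: the one-sided endpoints $a_1^+,a_2^-,a_2^+,\dots,a_{n+2}^-$ (with $a_i^-,a_i^+$ consecutive) together with all other points of their forward orbits, ordered along $I$; $C_0=\mathbb{R}^q$ with $y^{(i)}$ the $i$-th standard basis vector; $H_0=\mathbb{R}^n$ with basis indexed by the laps. $V_\beta=[v_{ij}]$ ($q\times q$, $\beta\in\mathbb{R}$): if $F(y^{(j)})=y^{(i)}$, $v_{ij}=\varepsilon(y^{(j)})|F'(y^{(j)})|^{-\beta}$ with $\varepsilon$ the sign of $F'$ at $y^{(j)}$ (column zero for limits from inside the hole); for every pair of consecutive entries that are the two one-sided versions of a turning/discontinuity point between $y^{(j)}$ and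 $y^{(i)}$: if $y^{(i)}>y^{(j)}$, pair $y^{(k)},y^{(k+1)}$, $j\le k<i$, set $v_{kj}=v_{ij}$, $v_{k+1,j}=-v_{ij}$; if $y^{(i)}<y^{(j)}$, pair $y^{(k-1)},y^{(k)}$, $i<k\le j$, set $v_{k-1,j}=-v_{ij}$, $v_{kj}=v_{ij}$; all other entries $0$. $U$ is the $n\times q$ matrix with entry $(j,i)$ equal to $1$ if $y^{(i)}\in I_j$, else $0$. $K_\beta$ is the $n\times n$ diagonal matrix with $k_{ii}=\varepsilon(I_i)|F'|_{I_i}|^{-\beta}$, $\varepsilon(I_i)$ the sign of $F'$ on $I_i$. *)

theory Defs
  imports "Jordan_Normal_Form.Matrix" "HOL-Library.Product_Lexorder"
begin

text \<open>
  The partition points are a 1 < a 2 < ... < a (n+2); the hole is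
  the open interval (a h, a (h+1)).
  A one-sided point is a pair (x, s) :: real \<times> bool, where s = True means x^+
  (limit from the right) and s = False means x^- (limit from the left).
  The lexicographic order on real \<times> bool (False < True) is the order along I
  in which x^- precedes x^+.
\<close>

definition lap_left :: "nat \<Rightarrow> nat \<Rightarrow> nat" where
  "lap_left h l = (if l < h then l else l + 1)"

definition lap_set :: "(nat \<Rightarrow> real) \<Rightarrow> nat \<Rightarrow> nat \<Rightarrow> real set" where
  "lap_set a h l = {a (lap_left h l) .. a (lap_left h l + 1)}"

definition in_lap :: "(nat \<Rightarrow> real) \<Rightarrow> nat \<Rightarrow> nat \<Rightarrow> real \<times> bool \<Rightarrow> bool" where
  "in_lap a h l p =
     (let lo = a (lap_left h l); hi = a (lap_left h l + 1) in
      if snd p then lo \<le> fst p \<and> fst p < hi else lo < fst p \<and> fst p \<le> hi)"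

text \<open>F = f_l^{-1} applied to a one-sided point of lap l (side flips when F decreases)\<close>
definition F_os :: "(nat \<Rightarrow> real) \<Rightarrow> (nat \<Rightarrow> real) \<Rightarrow> nat \<Rightarrow> real \<times> bool \<Rightarrow> real \<times> bool" where
  "F_os \<rho> \<sigma> l p = ((fst p - \<sigma> l) / \<rho> l, if \<rho> l > 0 then snd p else \<not> snd p)"

text \<open>forward orbit of a one-sided point (stops when the point lies in no lap, i.e. in the hole)\<close>
inductive_set fwd_orbit ::
  "(nat \<Rightarrow> real) \<Rightarrow> nat \<Rightarrow> nat \<Rightarrow> (nat \<Rightarrow> real) \<Rightarrow> (nat \<Rightarrow> real) \<Rightarrow> real \<times> bool \<Rightarrow> (real \<times> bool) set"
  for a h n \<rho> \<sigma> p where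
  start: "p \<in> fwd_orbit a h n \<rho> \<sigma> p"
| step: "x \<in> fwd_orbit a h n \<rho> \<sigma> p \<Longrightarrow> l \<in> {1..n} \<Longrightarrow> in_lap a h l x
          \<Longrightarrow> F_os \<rho> \<sigma> l x \<in> fwd_orbit a h n \<rho> \<sigma> p"

definition endpoints_os :: "(nat \<Rightarrow> real) \<Rightarrow> nat \<Rightarrow> (real \<times> bool) set" where
  "endpoints_os a n = {(a 1, True), (a (n + 2), False)} \<union> {(a m, s) | m s. 2 \<le> m \<and> m \<le> n + 1}"

text \<open>the list y^{(1)}, ..., y^{(q)} (0-indexed), ordered along I\<close>
definition ypts :: "(nat \<Rightarrow> real) \<Rightarrow> nat \<Rightarrow> nat \<Rightarrow> (nat \<Rightarrow> real) \<Rightarrow> (nat \<Rightarrow> real) \<Rightarrow> (real \<times> bool) list" where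
  "ypts a h n \<rho> \<sigma> = sorted_list_of_set (\<Union>e \<in> endpoints_os a n. fwd_orbit a h n \<rho> \<sigma> e)"

definition turning_pair :: "(nat \<Rightarrow> real) \<Rightarrow> nat \<Rightarrow> (real \<times> bool) list \<Rightarrow> nat \<Rightarrow> bool" where
  "turning_pair a n ys k = (Suc k < length ys \<and>
     (\<exists>m. 2 \<le> m \<and> m \<le> n + 1 \<and> ys ! k = (a m, False) \<and> ys ! Suc k = (a m, True)))"

text \<open>\<epsilon>(I_l) |F'|_{I_l}|^{-\<beta>}, with F' = 1/\<rho>_l on lap l\<close>
definition wt :: "(nat \<Rightarrow> real) \<Rightarrow> real \<Rightarrow> nat \<Rightarrow> real" where
  "wt \<rho> \<beta> l = sgn (1 / \<rho> l) * \<bar>1 / \<rho> l\<bar> powr (- \<beta>)"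

definition ind :: "bool \<Rightarrow> real" where
  "ind b = (if b then 1 else 0)"

text \<open>V_\<beta> (entries of the different rules are added up)\<close>
definition V_mat :: "(nat \<Rightarrow> real) \<Rightarrow> nat \<Rightarrow> nat \<Rightarrow> (nat \<Rightarrow> real) \<Rightarrow> (nat \<Rightarrow> real) \<Rightarrow> real \<Rightarrow> real mat" where
  "V_mat a h n \<rho> \<sigma> \<beta> =
    (let ys = ypts a h n \<rho> \<sigma>; q = length ys in
     mat q q (\<lambda>(i, j).
       \<Sum>l\<in>{1..n}. if in_lap a h l (ys ! j) then
         (let w = wt \<rho> \<beta> l;
              i0 = (THE i0. i0 < q \<and> ys ! i0 = F_os \<rho> \<sigma> l (ys ! j)) in
          w * (ind (i = i0)
               + (\<Sum>k\<in>{k. turning_pair a n ys k \<and> j \<le> k \<and> k < i0}. ind (i = k) - ind (i = Suc k))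
               + (\<Sum>k\<in>{k. turning_pair a n ys k \<and> i0 \<le> k \<and> k < j}. ind (i = Suc k) - ind (i = k))))
       else 0))"

definition U_mat :: "(nat \<Rightarrow> real) \<Rightarrow> nat \<Rightarrow> nat \<Rightarrow> (nat \<Rightarrow> real) \<Rightarrow> (nat \<Rightarrow> real) \<Rightarrow> real mat" where
  "U_mat a h n \<rho> \<sigma> =
    (let ys = ypts a h n \<rho> \<sigma> in
     mat n (length ys) (\<lambda>(l, i). ind (in_lap a h (Suc l) (ys ! i))))"

definition K_mat :: "nat \<Rightarrow> (nat \<Rightarrow> real) \<Rightarrow> real \<Rightarrow> real mat" where
  "K_mat n \<rho> \<beta> = mat n n (\<lambda>(l, l'). if l = l' then wt \<rho> \<beta> (Suc l) else 0)"

end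

theory Submission
  imports Defs
begin

text \<open>
  Column j of V is, for the unique lap
  l' containing y_j, the weight of l' times the unit vector at F(y_j), corrected by
  e_k - e_(k+1) (with the sign of the direction from y_j to F(y_j)) at every turning pair k
  between them.  Paired with the indicator of lap l, the unit vector picks out its value at
  F(y_j), and the corrections telescope this back to its value at y_j: between consecutive
  points the indicator of a lap can only change across a turning pair, because all points lie
  in I and so the outer endpoints a_1, a_(n+2) never separate two of them.  Hence both
  products have entry wt(l) [y_j in I_l].
\<close>

lemma sum_mult_ind:
  fixes g :: "nat \<Rightarrow> real"
  assumes "k < q"
  shows "(\<Sum>i<q. g i * ind (i = k)) = g k"
  using assms by (simp add: ind_def if_distrib[of "(*) _"] cong: if_cong)

lemma sum_jumps_telescope:
  fixes g :: "nat \<Rightarrow> real"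
  assumes "u \<le> v" and flat: "\<And>k. u \<le> k \<Longrightarrow> k < v \<Longrightarrow> \<not> T k \<Longrightarrow> g k = g (Suc k)"
  shows "(\<Sum>k\<in>{k. T k \<and> u \<le> k \<and> k < v}. g k - g (Suc k)) = g u - g v"
proof -
  have "(\<Sum>k\<in>{k. T k \<and> u \<le> k \<and> k < v}. g k - g (Suc k)) = (\<Sum>k = u..<v. g k - g (Suc k))"
    by (rule sum.mono_neutral_left) (use flat in force)+
  also have "\<dots> = g u - g v"
    using sum_Suc_diff'[OF assms(1), of g] by (simp add: sum_subtractf)
  finally show ?thesis .
qed

definition corrected_unit :: "(nat \<Rightarrow> bool) \<Rightarrow> nat \<Rightarrow> nat \<Rightarrow> nat \<Rightarrow> real" where
  "corrected_unit T j i0 i =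
     ind (i = i0)
     + (\<Sum>k\<in>{k. T k \<and> j \<le> k \<and> k < i0}. ind (i = k) - ind (i = Suc k))
     + (\<Sum>k\<in>{k. T k \<and> i0 \<le> k \<and> k < j}. ind (i = Suc k) - ind (i = k))"

lemma sum_mult_ind_diff:
  fixes g :: "nat \<Rightarrow> real"
  assumes "finite K" "\<And>k. k \<in> K \<Longrightarrow> Suc k < q"
  shows "(\<Sum>i<q. g i * (\<Sum>k\<in>K. ind (i = k) - ind (i = Suc k))) = (\<Sum>k\<in>K. g k - g (Suc k))"
proof -
  have "(\<Sum>i<q. g i * (\<Sum>k\<in>K. ind (i = k) - ind (i = Suc k)))
      = (\<Sum>k\<in>K. (\<Sum>i<q. g i * ind (i = k)) - (\<Sum>i<q. g i * ind (i = Suc k)))"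
    by (simp add: sum_distrib_left right_diff_distrib sum_subtractf sum.swap[of _ K])
  also have "\<dots> = (\<Sum>k\<in>K. g k - g (Suc k))"
    using assms(2) by (intro sum.cong refl) (metis Suc_lessD sum_mult_ind)
  finally show ?thesis .
qed

lemma sum_mult_corrected_unit:
  fixes g :: "nat \<Rightarrow> real"
  assumes "i0 < q" "j < q"
    and T_bound: "\<And>k. T k \<Longrightarrow> Suc k < q"
    and flat: "\<And>k. Suc k < q \<Longrightarrow> \<not> T k \<Longrightarrow> g k = g (Suc k)"
  shows "(\<Sum>i<q. g i * corrected_unit T j i0 i) = g j"
proof -
  let ?A = "{k. T k \<and> j \<le> k \<and> k < i0}" and ?B = "{k. T k \<and> i0 \<le> k \<and> k < j}"
  have fin: "finite ?A" "finite ?B" by (auto intro: finite_subset[of _ "{..<i0}"] finite_subset[of _ "{..<j}"])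
  have "corrected_unit T j i0 i = ind (i = i0)
      + (\<Sum>k\<in>?A. ind (i = k) - ind (i = Suc k)) - (\<Sum>k\<in>?B. ind (i = k) - ind (i = Suc k))" for i
    by (simp add: corrected_unit_def sum_subtractf)
  then have "(\<Sum>i<q. g i * corrected_unit T j i0 i)
      = g i0 + (\<Sum>k\<in>?A. g k - g (Suc k)) - (\<Sum>k\<in>?B. g k - g (Suc k))"
    using sum_mult_ind_diff[OF fin(1), of q g] sum_mult_ind_diff[OF fin(2), of q g] T_bound
    by (simp add: distrib_left right_diff_distrib sum.distrib sum_subtractf sum_mult_ind[OF assms(1)])
  also have "\<dots> = g j"
  proof (cases "j \<le> i0")
    case True
    have B: "?B = {}" using True by auto
    have "(\<Sum>k\<in>?A. g k - g (Suc k)) = g j - g i0"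
      by (rule sum_jumps_telescope[OF True]) (use flat assms(1) in auto)
    then show ?thesis unfolding B by simp
  next
    case False
    have A: "?A = {}" using False by auto
    have "(\<Sum>k\<in>?B. g k - g (Suc k)) = g i0 - g j"
      by (rule sum_jumps_telescope) (use False flat assms(2) in auto)
    then show ?thesis unfolding A by simp
  qed
  finally show ?thesis .
qed

definition in_os_interval :: "real \<Rightarrow> real \<Rightarrow> real \<times> bool \<Rightarrow> bool" where
  "in_os_interval lo hi y \<longleftrightarrow> (lo, True) \<le> y \<and> y \<le> (hi, False)"

lemma in_os_interval_Pair:
  "in_os_interval lo hi (x, s) \<longleftrightarrow> (if s then lo \<le> x \<and> x < hi else lo < x \<and> x \<le> hi)"
  by (cases s) (auto simp: in_os_interval_def)

lemma in_os_interval_change: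
  assumes "y1 < y2" "in_os_interval lo hi y1 \<noteq> in_os_interval lo hi y2"
  shows "y1 < (lo, True) \<and> (lo, True) \<le> y2 \<or> y1 < (hi, True) \<and> (hi, True) \<le> y2"
  using assms by (cases y1; cases y2) (auto simp: in_os_interval_def)

lemma in_lap_iff_in_os_interval:
  "in_lap a h l y \<longleftrightarrow> in_os_interval (a (lap_left h l)) (a (lap_left h l + 1)) y"
  by (cases y) (simp add: in_lap_def in_os_interval_Pair)

lemma lap_left_bounds: "1 \<le> l \<Longrightarrow> l \<le> n \<Longrightarrow> 1 \<le> lap_left h l \<and> lap_left h l + 1 \<le> n + 2"
  by (auto simp: lap_left_def)

lemma lap_left_strict_mono: "l1 < l2 \<Longrightarrow> lap_left h l1 < lap_left h l2"
  by (auto simp: lap_left_def)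

lemma F_os_in_os_interval:
  shows "0 < \<rho> l \<Longrightarrow> in_os_interval (\<rho> l * u + \<sigma> l) (\<rho> l * v + \<sigma> l) y
           \<Longrightarrow> in_os_interval u v (F_os \<rho> \<sigma> l y)"
    and "\<rho> l < 0 \<Longrightarrow> in_os_interval (\<rho> l * v + \<sigma> l) (\<rho> l * u + \<sigma> l) y
           \<Longrightarrow> in_os_interval u v (F_os \<rho> \<sigma> l y)"
  by (cases y; auto simp: F_os_def in_os_interval_Pair pos_le_divide_eq pos_divide_le_eq
      pos_less_divide_eq pos_divide_less_eq neg_le_divide_eq neg_divide_le_eq neg_less_divide_eq
      neg_divide_less_eq algebra_simps split: if_splits)+

lemma affine_image_Icc_endpoints:
  fixes r c u v lo hi :: real
  assumes "u \<le> v" "lo < hi" "(\<lambda>x. r * x + c) ` {u..v} = {lo..hi}"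
  shows "0 < r \<and> r * u + c = lo \<and> r * v + c = hi \<or> r < 0 \<and> r * v + c = lo \<and> r * u + c = hi"
  using assms by (auto simp: image_affinity_atLeastAtMost less_le split: if_splits)

lemma sorted_wrt_less_between_consecutive:
  fixes xs :: "'a::linorder list"
  assumes "sorted_wrt (<) xs" "Suc k < length xs" "z \<in> set xs" "xs ! k \<le> z" "z \<le> xs ! Suc k"
  shows "z = xs ! k \<or> z = xs ! Suc k"
proof -
  obtain p where p: "p < length xs" "z = xs ! p" using assms(3) by (metis in_set_conv_nth)
  have "\<not> p < k" "\<not> Suc k < p"
    using sorted_wrt_nth_less[OF assms(1), of p k] sorted_wrt_nth_less[OF assms(1), of "Suc k" p] assms p
    by auto
  then have "p = k \<or> p = Suc k" by linarith
  then show ?thesis using p by auto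
qed

locale affine_laps =
  fixes n h :: nat and a \<rho> \<sigma> :: "nat \<Rightarrow> real"
  assumes a_step_less: "\<And>i. 1 \<le> i \<Longrightarrow> i < n + 2 \<Longrightarrow> a i < a (i + 1)"
    and image: "\<And>l. l \<in> {1..n} \<Longrightarrow>
                  (\<lambda>x. \<rho> l * x + \<sigma> l) ` {a 1 .. a (n + 2)} = lap_set a h l"
    and finite_orbit: "\<And>e. e \<in> endpoints_os a n \<Longrightarrow> finite (fwd_orbit a h n \<rho> \<sigma> e)"
begin

lemma a_less:
  assumes "1 \<le> i" "i < j" "j \<le> n + 2"
  shows "a i < a j"
proof -
  have "Suc i \<le> j" using assms(2) by simp
  then show ?thesis using assms(3)
  proof (induction j rule: dec_induct)
    case base
    then show ?case using a_step_less[of i] assms(1) by simp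
  next
    case (step j)
    then show ?case using a_step_less[of j] assms(1) by simp
  qed
qed

abbreviation in_I :: "real \<times> bool \<Rightarrow> bool" where
  "in_I \<equiv> in_os_interval (a 1) (a (n + 2))"

lemma F_os_in_I:
  assumes l: "l \<in> {1..n}" and y: "in_lap a h l y"
  shows "in_I (F_os \<rho> \<sigma> l y)"
proof -
  have "a 1 < a (n + 2)" "a (lap_left h l) < a (lap_left h l + 1)"
    using a_less lap_left_bounds[of l n h] l by auto
  then have "0 < \<rho> l \<and> \<rho> l * a 1 + \<sigma> l = a (lap_left h l) \<and> \<rho> l * a (n + 2) + \<sigma> l = a (lap_left h l + 1)
    \<or> \<rho> l < 0 \<and> \<rho> l * a (n + 2) + \<sigma> l = a (lap_left h l) \<and> \<rho> l * a 1 + \<sigma> l = a (lap_left h l + 1)"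
    using image[OF l] by (intro affine_image_Icc_endpoints) (auto simp: lap_set_def)
  then show ?thesis
    using y F_os_in_os_interval[where u = "a 1" and v = "a (n + 2)" and y = y]
    unfolding in_lap_iff_in_os_interval by metis
qed

lemma fwd_orbit_in_I: "x \<in> fwd_orbit a h n \<rho> \<sigma> e \<Longrightarrow> in_I e \<Longrightarrow> in_I x"
  by (induction rule: fwd_orbit.induct) (blast intro: F_os_in_I)+

lemma endpoints_os_in_I:
  assumes "e \<in> endpoints_os a n"
  shows "in_I e"
proof -
  have "in_I (a 1, True)" "in_I (a (n + 2), False)"
    using a_less[of 1 "n + 2"] by (simp_all add: in_os_interval_Pair)
  moreover have "in_I (a m, s)" if "2 \<le> m" "m \<le> n + 1" for m s
    using a_less[of 1 m] a_less[of m "n + 2"] that by (simp add: in_os_interval_Pair)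
  ultimately show ?thesis
    using assms unfolding endpoints_os_def by blast
qed

lemma finite_endpoints_os: "finite (endpoints_os a n)"
proof -
  have "endpoints_os a n \<subseteq> {(a 1, True), (a (n + 2), False)} \<union> (\<lambda>(m, s). (a m, s)) ` ({2..n+1} \<times> UNIV)"
    unfolding endpoints_os_def by auto
  then show ?thesis by (rule finite_subset) simp
qed

abbreviation ys :: "(real \<times> bool) list" where
  "ys \<equiv> ypts a h n \<rho> \<sigma>"

lemma set_ys: "set ys = (\<Union>e \<in> endpoints_os a n. fwd_orbit a h n \<rho> \<sigma> e)"
  unfolding ypts_def using finite_endpoints_os finite_orbit by simp

lemma sorted_ys: "sorted_wrt (<) ys"
  unfolding ypts_def by (rule strict_sorted_list_of_set)

lemma distinct_ys: "distinct ys"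
  unfolding ypts_def by simp

lemma ys_in_I: "y \<in> set ys \<Longrightarrow> in_I y"
  unfolding set_ys using fwd_orbit_in_I endpoints_os_in_I by blast

lemma F_os_in_ys: "y \<in> set ys \<Longrightarrow> l \<in> {1..n} \<Longrightarrow> in_lap a h l y \<Longrightarrow> F_os \<rho> \<sigma> l y \<in> set ys"
  unfolding set_ys by (blast intro: fwd_orbit.step)

lemma interior_endpoint_in_ys: "2 \<le> m \<Longrightarrow> m \<le> n + 1 \<Longrightarrow> (a m, s) \<in> set ys"
  unfolding set_ys endpoints_os_def by (blast intro: fwd_orbit.start)

lemma lap_unique:
  assumes "l1 \<in> {1..n}" "l2 \<in> {1..n}" "in_lap a h l1 y" "in_lap a h l2 y"
  shows "l1 = l2"
proof (rule ccontr)
  have False if "l1 \<in> {1..n}" "l2 \<in> {1..n}" "in_lap a h l1 y" "in_lap a h l2 y" "l1 < l2" for l1 l2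
  proof -
    have "a (lap_left h l1 + 1) \<le> a (lap_left h l2)"
      using a_less[of "lap_left h l1 + 1" "lap_left h l2"] lap_left_strict_mono[OF \<open>l1 < l2\<close>, of h]
        lap_left_bounds[of l1 n h] lap_left_bounds[of l2 n h] that(1,2)
      by (cases "lap_left h l1 + 1 = lap_left h l2") auto
    then show False
      using that(3,4) by (cases y) (auto simp: in_lap_iff_in_os_interval in_os_interval_Pair split: if_splits)
  qed
  then show "l1 \<noteq> l2 \<Longrightarrow> False" using assms by (metis linorder_neqE_nat)
qed

lemma turning_pairI:
  assumes m: "2 \<le> m" "m \<le> n + 1" and k: "Suc k < length ys"
    and below: "ys ! k < (a m, True)" and above: "(a m, True) \<le> ys ! Suc k"
  shows "turning_pair a n ys k"
proof -
  have between: "z = ys ! k \<or> z = ys ! Suc k" if "ys ! k \<le> z" "z \<le> ys ! Suc k" "z \<in> set ys" for z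
    using sorted_wrt_less_between_consecutive[OF sorted_ys k] that by blast
  have "ys ! k \<le> (a m, False)" using below by (cases "ys ! k") auto
  moreover have "(a m, False) < ys ! Suc k" using above by (cases "ys ! Suc k") auto
  ultimately have left: "ys ! k = (a m, False)"
    using between[of "(a m, False)"] interior_endpoint_in_ys[OF m] by fastforce
  then have "ys ! Suc k = (a m, True)"
    using between[of "(a m, True)"] interior_endpoint_in_ys[OF m] above by fastforce
  then show ?thesis using left m k by (auto simp: turning_pair_def)
qed

lemma in_lap_Suc_eq:
  assumes l: "l \<in> {1..n}" and k: "Suc k < length ys" and not_turning: "\<not> turning_pair a n ys k"
  shows "in_lap a h l (ys ! k) = in_lap a h l (ys ! Suc k)"
proof (rule ccontr)
  define m where "m = lap_left h l"
  have m: "1 \<le> m" "m + 1 \<le> n + 2" using lap_left_bounds[of l n h] l by (auto simp: m_def)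
  have less: "ys ! k < ys ! Suc k" using sorted_wrt_nth_less[OF sorted_ys, of k "Suc k"] k by simp
  have I: "in_I (ys ! k)" "in_I (ys ! Suc k)" using ys_in_I k by auto
  assume "in_lap a h l (ys ! k) \<noteq> in_lap a h l (ys ! Suc k)"
  then have "ys ! k < (a m, True) \<and> (a m, True) \<le> ys ! Suc k
      \<or> ys ! k < (a (m + 1), True) \<and> (a (m + 1), True) \<le> ys ! Suc k"
    using in_os_interval_change[OF less] by (simp add: in_lap_iff_in_os_interval m_def)
  then show False
  proof
    assume cross: "ys ! k < (a m, True) \<and> (a m, True) \<le> ys ! Suc k"
    then have "m \<noteq> 1" using I(1) by (cases "ys ! k") (auto simp: in_os_interval_Pair split: if_splits)
    then show False using turning_pairI[of m k] m k cross not_turning by simp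
  next
    assume cross: "ys ! k < (a (m + 1), True) \<and> (a (m + 1), True) \<le> ys ! Suc k"
    then have "m + 1 \<noteq> n + 2" using I(2) by (cases "ys ! Suc k") (auto simp: in_os_interval_Pair split: if_splits)
    then show False using turning_pairI[of "m + 1" k] m k cross not_turning by simp
  qed
qed

definition F_index :: "nat \<Rightarrow> nat \<Rightarrow> nat" where
  "F_index l j = (THE i. i < length ys \<and> ys ! i = F_os \<rho> \<sigma> l (ys ! j))"

lemma F_index_less:
  assumes "j < length ys" "l \<in> {1..n}" "in_lap a h l (ys ! j)"
  shows "F_index l j < length ys"
proof -
  obtain i where "i < length ys" "ys ! i = F_os \<rho> \<sigma> l (ys ! j)"
    using F_os_in_ys assms by (metis in_set_conv_nth nth_mem)
  then have "\<exists>!i. i < length ys \<and> ys ! i = F_os \<rho> \<sigma> l (ys ! j)"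
    using distinct_ys nth_eq_iff_index_eq by metis
  then show ?thesis unfolding F_index_def by (rule theI'[THEN conjunct1])
qed

lemma V_mat_entry:
  assumes "i < length ys" "j < length ys"
  shows "V_mat a h n \<rho> \<sigma> \<beta> $$ (i, j) =
    (\<Sum>l\<in>{1..n}. if in_lap a h l (ys ! j)
       then wt \<rho> \<beta> l * corrected_unit (turning_pair a n ys) j (F_index l j) i else 0)"
  using assms unfolding V_mat_def F_index_def corrected_unit_def Let_def by simp

lemma U_mat_entry: "l < n \<Longrightarrow> i < length ys \<Longrightarrow> U_mat a h n \<rho> \<sigma> $$ (l, i) = ind (in_lap a h (Suc l) (ys ! i))"
  by (simp add: U_mat_def Let_def)

lemma mat_dims:
  "dim_row (U_mat a h n \<rho> \<sigma>) = n" "dim_col (U_mat a h n \<rho> \<sigma>) = length ys"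
  "dim_row (V_mat a h n \<rho> \<sigma> \<beta>) = length ys" "dim_col (V_mat a h n \<rho> \<sigma> \<beta>) = length ys"
  "dim_row (K_mat n \<rho> \<beta>) = n" "dim_col (K_mat n \<rho> \<beta>) = n"
  by (simp_all add: U_mat_def V_mat_def K_mat_def Let_def)

lemma U_V_entry:
  assumes l: "l < n" and j: "j < length ys"
  shows "(U_mat a h n \<rho> \<sigma> * V_mat a h n \<rho> \<sigma> \<beta>) $$ (l, j) =
    (\<Sum>l'\<in>{1..n}. if in_lap a h l' (ys ! j) then wt \<rho> \<beta> l' * ind (in_lap a h (Suc l) (ys ! j)) else 0)"
proof -
  define g where "g i = ind (in_lap a h (Suc l) (ys ! i))" for i
  define C where "C l' = corrected_unit (turning_pair a n ys) j (F_index l' j)" for l'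
  have "(U_mat a h n \<rho> \<sigma> * V_mat a h n \<rho> \<sigma> \<beta>) $$ (l, j)
      = (\<Sum>i<length ys. g i * (\<Sum>l'\<in>{1..n}. if in_lap a h l' (ys ! j) then wt \<rho> \<beta> l' * C l' i else 0))"
    unfolding g_def C_def
    using l j by (simp add: mat_dims scalar_prod_def atLeast0LessThan U_mat_entry V_mat_entry)
  also have "\<dots> = (\<Sum>l'\<in>{1..n}. \<Sum>i<length ys. g i * (if in_lap a h l' (ys ! j) then wt \<rho> \<beta> l' * C l' i else 0))"
    unfolding sum_distrib_left by (rule sum.swap)
  also have "\<dots> = (\<Sum>l'\<in>{1..n}. if in_lap a h l' (ys ! j) then wt \<rho> \<beta> l' * (\<Sum>i<length ys. g i * C l' i) else 0)"
    by (intro sum.cong refl) (simp add: sum_distrib_left mult.left_commute)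
  also have "\<dots> = (\<Sum>l'\<in>{1..n}. if in_lap a h l' (ys ! j) then wt \<rho> \<beta> l' * g j else 0)"
  proof (intro sum.cong refl)
    fix l' assume l': "l' \<in> {1..n}"
    have "(\<Sum>i<length ys. g i * C l' i) = g j" if "in_lap a h l' (ys ! j)"
      unfolding C_def
    proof (rule sum_mult_corrected_unit)
      show "F_index l' j < length ys" using F_index_less j l' that .
      show "Suc k < length ys" if "turning_pair a n ys k" for k using that by (simp add: turning_pair_def)
      show "g k = g (Suc k)" if "Suc k < length ys" "\<not> turning_pair a n ys k" for k
        using in_lap_Suc_eq[of "Suc l" k] l that by (simp add: g_def)
    qed (rule j)
    then show "(if in_lap a h l' (ys ! j) then wt \<rho> \<beta> l' * (\<Sum>i<length ys. g i * C l' i) else 0)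
      = (if in_lap a h l' (ys ! j) then wt \<rho> \<beta> l' * g j else 0)" by simp
  qed
  finally show ?thesis unfolding g_def .
qed

lemma K_U_entry:
  assumes l: "l < n" and j: "j < length ys"
  shows "(K_mat n \<rho> \<beta> * U_mat a h n \<rho> \<sigma>) $$ (l, j) = wt \<rho> \<beta> (Suc l) * ind (in_lap a h (Suc l) (ys ! j))"
  using assms by (simp add: mat_dims scalar_prod_def atLeast0LessThan U_mat_entry K_mat_def if_distrib[of "\<lambda>x. x * _"] cong: if_cong)

lemma U_V_eq_K_U: "U_mat a h n \<rho> \<sigma> * V_mat a h n \<rho> \<sigma> \<beta> = K_mat n \<rho> \<beta> * U_mat a h n \<rho> \<sigma>"
proof (rule eq_matI)
  fix l j
  assume "l < dim_row (K_mat n \<rho> \<beta> * U_mat a h n \<rho> \<sigma>)" "j < dim_col (K_mat n \<rho> \<beta> * U_mat a h n \<rho> \<sigma>)"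
  then have l: "l < n" and j: "j < length ys" by (simp_all add: mat_dims)
  have "(\<Sum>l'\<in>{1..n}. if in_lap a h l' (ys ! j) then wt \<rho> \<beta> l' * ind (in_lap a h (Suc l) (ys ! j)) else 0)
      = (\<Sum>l'\<in>{1..n}. if l' = Suc l then wt \<rho> \<beta> l' * ind (in_lap a h (Suc l) (ys ! j)) else 0)"
    using lap_unique[of _ "Suc l" "ys ! j"] l by (intro sum.cong refl) (auto simp: ind_def)
  then show "(U_mat a h n \<rho> \<sigma> * V_mat a h n \<rho> \<sigma> \<beta>) $$ (l, j) = (K_mat n \<rho> \<beta> * U_mat a h n \<rho> \<sigma>) $$ (l, j)"
    using l j by (simp add: U_V_entry K_U_entry)
qed (simp_all add: mat_dims)

end

theorem lemma3:
  fixes n h :: nat and a \<rho> \<sigma> :: "nat \<Rightarrow> real" and \<beta> :: real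
  assumes a_mono: "\<And>i. 1 \<le> i \<Longrightarrow> i < n + 2 \<Longrightarrow> a i < a (i + 1)"
    and hole: "1 \<le> h" "h \<le> n + 1"
    and contr: "\<And>l. l \<in> {1..n} \<Longrightarrow> 0 < \<bar>\<rho> l\<bar> \<and> \<bar>\<rho> l\<bar> < 1"
    and image: "\<And>l. l \<in> {1..n} \<Longrightarrow>
                  (\<lambda>x. \<rho> l * x + \<sigma> l) ` {a 1 .. a (n + 2)} = lap_set a h l"
    and fin: "\<And>e. e \<in> endpoints_os a n \<Longrightarrow> finite (fwd_orbit a h n \<rho> \<sigma> e)"
  shows "U_mat a h n \<rho> \<sigma> * V_mat a h n \<rho> \<sigma> \<beta> = K_mat n \<rho> \<beta> * U_mat a h n \<rho> \<sigma>"
proof -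
  interpret affine_laps n h a \<rho> \<sigma>
    using a_mono image fin by unfold_locales
  show ?thesis by (rule U_V_eq_K_U)
qed

end
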